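(* Let $\alpha\in(0,1)$ and let $G=(V,E)$ be a finite connected graph satisfying CD$_\alpha(F;0)$ for a CD-function $F$ with relaxation function $\varphi$. Suppose $u:[0,\infty)\times V\to(0,\infty)$ solves the heat equation on $G$. Then $$-\frac{\Delta(u^\alpha)}{\alpha u^\alpha}=\mathcal L_\alpha(\log u)\le\varphi(t)\quad\text{on }(0,\infty)\times V,$$ and consequently $$\partial_t(\log u)\ge\Psi_\Upsilon(\log u)-\tfrac1\alpha\Psi_{\Upsilon_\alpha}(\log u)-\varphi(t)\quad\text{on }(0,\infty)\times V.$$
   Context: Graphs are undirected, edge weights $w_{xy}=w_{yx}>0$, $\mu:V\to(0,\infty)$, $\Delta u(x)=\frac1{\mu(x)}\sum_{y\sim x}w_{xy}(u(y)-u(x))$, $L=-\Delta$, $\Psi_H(v)(x)=\frac1{\mu(x)}\sum_{y\sim x}w_{xy}H(v(y)-v(x))$, $\Upsilon(z)=e^z-1-z$, $\Upsilon_\alpha(z)=\Upsilon(\alpha z)$. $\mathcal L_\alpha(v)(x)=-\frac1\alpha\Psi_{\Upsilon'}(\alpha v)(x)$; $\mathcal C_\alpha(v)(x)=\frac1{\mu(x)}\sum_{y\sim x}w_{xy}e^{\alpha(v(y)-v(x))}(\Psi_{\Upsilon'}(v)(y)-\Psi_{\Upsilon'}(v)(x))$. A CD-function is a continuous $F:[0,\infty)\to[0,\infty)$ with $F(0)=0$, $F(x)/x$ strictly increasing on $(0,\infty)$, $\int_1^\infty dr/F(r)<\infty$; its relaxation function is the unique positive solution of $\dot\varphi+F(\varphi)=0$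 on $(0,\infty)$ with $\varphi(0+)=\infty$. $G$ satisfies CD$_\alpha(F;0)$ if for every $x\in V$ and $v:V\to\mathbb R$ with $\mathcal L_\alpha(v)(x)>0$ and $\mathcal L_\alpha(v)(x)\ge\mathcal L_\alpha(v)(y)$ for all $y\sim x$, $\mathcal C_\alpha(v)(x)\ge F(Lv(x))$. A solution of the heat equation is $u$, $C^1$ in $t$, with $\partial_tu=\Delta u$ on $[0,\infty)\times V$. *)

theory Defs
  imports "HOL-Analysis.Analysis"
begin

text \<open>The edge weights are
  w :: 'v => 'v => real, symmetric and nonnegative; x ~ y iff w x y > 0.
  Sums over neighbours are sums over all vertices weighted by w (non-neighbours
  have weight 0).\<close>

definition adj :: "('v \<Rightarrow> 'v \<Rightarrow> real) \<Rightarrow> 'v \<Rightarrow> 'v \<Rightarrow> bool" where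
  "adj w x y \<longleftrightarrow> w x y > 0"

definition weighted_graph :: "('v::finite \<Rightarrow> 'v \<Rightarrow> real) \<Rightarrow> ('v \<Rightarrow> real) \<Rightarrow> bool" where
  "weighted_graph w \<mu> \<longleftrightarrow> (\<forall>x y. w x y = w y x) \<and> (\<forall>x y. w x y \<ge> 0) \<and> (\<forall>x. \<mu> x > 0)"

definition connected_graph :: "('v \<Rightarrow> 'v \<Rightarrow> real) \<Rightarrow> bool" where
  "connected_graph w \<longleftrightarrow> (\<forall>x y. (adj w)\<^sup>*\<^sup>* x y)"

definition laplacian :: "('v::finite \<Rightarrow> 'v \<Rightarrow> real) \<Rightarrow> ('v \<Rightarrow> real) \<Rightarrow> ('v \<Rightarrow> real) \<Rightarrow> 'v \<Rightarrow> real" where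
  "laplacian w \<mu> u x = (1 / \<mu> x) * (\<Sum>y\<in>UNIV. w x y * (u y - u x))"

definition Lop :: "('v::finite \<Rightarrow> 'v \<Rightarrow> real) \<Rightarrow> ('v \<Rightarrow> real) \<Rightarrow> ('v \<Rightarrow> real) \<Rightarrow> 'v \<Rightarrow> real" where
  "Lop w \<mu> u x = - laplacian w \<mu> u x"

definition Psi :: "('v::finite \<Rightarrow> 'v \<Rightarrow> real) \<Rightarrow> ('v \<Rightarrow> real) \<Rightarrow> (real \<Rightarrow> real) \<Rightarrow> ('v \<Rightarrow> real) \<Rightarrow> 'v \<Rightarrow> real" where
  "Psi w \<mu> H v x = (1 / \<mu> x) * (\<Sum>y\<in>UNIV. w x y * H (v y - v x))"

definition Upsilon :: "real \<Rightarrow> real" where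
  "Upsilon z = exp z - 1 - z"

definition Upsilon' :: "real \<Rightarrow> real" where
  "Upsilon' z = exp z - 1"

definition Upsilon_a :: "real \<Rightarrow> real \<Rightarrow> real" where
  "Upsilon_a \<alpha> z = Upsilon (\<alpha> * z)"

definition L_alpha :: "('v::finite \<Rightarrow> 'v \<Rightarrow> real) \<Rightarrow> ('v \<Rightarrow> real) \<Rightarrow> real \<Rightarrow> ('v \<Rightarrow> real) \<Rightarrow> 'v \<Rightarrow> real" where
  "L_alpha w \<mu> \<alpha> v x = - (1 / \<alpha>) * Psi w \<mu> Upsilon' (\<lambda>y. \<alpha> * v y) x"

definition C_alpha :: "('v::finite \<Rightarrow> 'v \<Rightarrow> real) \<Rightarrow> ('v \<Rightarrow> real) \<Rightarrow> real \<Rightarrow> ('v \<Rightarrow> real) \<Rightarrow> 'v \<Rightarrow> real" where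
  "C_alpha w \<mu> \<alpha> v x = (1 / \<mu> x) * (\<Sum>y\<in>UNIV. w x y * exp (\<alpha> * (v y - v x)) *
      (Psi w \<mu> Upsilon' v y - Psi w \<mu> Upsilon' v x))"

definition CD_function :: "(real \<Rightarrow> real) \<Rightarrow> bool" where
  "CD_function F \<longleftrightarrow> continuous_on {0..} F \<and> F 0 = 0 \<and> (\<forall>x\<ge>0. F x \<ge> 0)
     \<and> strict_mono_on {0<..} (\<lambda>x. F x / x)
     \<and> (\<lambda>r. 1 / F r) integrable_on {1..}"

text \<open>phi is the relaxation function of F: positive solution of phi' + F(phi) = 0 on
  (0,oo) with phi(0+) = oo (such a solution is unique).\<close>
definition relaxation_function :: "(real \<Rightarrow> real) \<Rightarrow> (real \<Rightarrow> real) \<Rightarrow> bool" where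
  "relaxation_function F \<phi> \<longleftrightarrow>
     (\<forall>t>0. \<phi> t > 0 \<and> (\<phi> has_real_derivative (- F (\<phi> t))) (at t))
     \<and> filterlim \<phi> at_top (at_right 0)"

definition CD_alpha :: "('v::finite \<Rightarrow> 'v \<Rightarrow> real) \<Rightarrow> ('v \<Rightarrow> real) \<Rightarrow> real \<Rightarrow> (real \<Rightarrow> real) \<Rightarrow> bool" where
  "CD_alpha w \<mu> \<alpha> F \<longleftrightarrow> (\<forall>x v. L_alpha w \<mu> \<alpha> v x > 0
       \<and> (\<forall>y. adj w x y \<longrightarrow> L_alpha w \<mu> \<alpha> v x \<ge> L_alpha w \<mu> \<alpha> v y)
       \<longrightarrow> C_alpha w \<mu> \<alpha> v x \<ge> F (Lop w \<mu> v x))"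

definition heat_solution :: "('v::finite \<Rightarrow> 'v \<Rightarrow> real) \<Rightarrow> ('v \<Rightarrow> real) \<Rightarrow> (real \<Rightarrow> 'v \<Rightarrow> real) \<Rightarrow> bool" where
  "heat_solution w \<mu> u \<longleftrightarrow> (\<forall>x. (\<forall>t\<ge>0. ((\<lambda>s. u s x) has_real_derivative laplacian w \<mu> (u t) x) (at t within {0..}))
       \<and> continuous_on {0..} (\<lambda>t. laplacian w \<mu> (u t) x))"

end

theory Submission
  imports Defs
begin

text \<open>Put \<open>v = log u\<close> and \<open>H(t) = L\<^sub>\<alpha>(v(t))\<close>. Along the heat flow \<open>\<partial>\<^sub>t v = \<Psi>\<^bsub>\<Upsilon>'\<^esub>(v)\<close>, and
  differentiating gives \<open>\<partial>\<^sub>t H = -C\<^sub>\<alpha>(v)\<close>. At a vertex where \<open>H\<close> attains a positive maximum,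
  CD\<open>\<^sub>\<alpha>(F;0)\<close> together with \<open>H \<le> L v\<close> (from \<open>e\<^sup>z - 1 \<ge> z\<close>) and the monotonicity of \<open>F\<close>
  give \<open>\<partial>\<^sub>t H \<le> -F(H)\<close>, so \<open>H\<close> is a subsolution of the relaxation equation. As \<open>\<phi>(0+) = \<infinity>\<close>
  while \<open>H\<close> is bounded near \<open>t = 0\<close>, looking at the first time where \<open>H\<close> reaches \<open>\<phi> + \<epsilon>\<close>
  yields a contradiction, whence \<open>H \<le> \<phi>\<close>.\<close>

lemma Psi_Upsilon'_ln:
  fixes w :: "'v::finite \<Rightarrow> 'v \<Rightarrow> real"
  assumes pos: "\<And>y. U y > 0"
  shows "Psi w \<mu> Upsilon' (\<lambda>y. ln (U y)) x = laplacian w \<mu> U x / U x"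
proof -
  have "w x y * (exp (ln (U y) - ln (U x)) - 1) = w x y * (U y - U x) / U x" for y
    using pos[of x] pos[of y] by (simp add: exp_diff field_simps)
  then show ?thesis
    unfolding Psi_def Upsilon'_def laplacian_def by (simp add: sum_divide_distrib[symmetric])
qed

lemma laplacian_powr_eq_L_alpha_ln:
  fixes w :: "'v::finite \<Rightarrow> 'v \<Rightarrow> real"
  assumes pos: "\<And>y. U y > 0" and "\<alpha> > 0"
  shows "- laplacian w \<mu> (\<lambda>y. U y powr \<alpha>) x / (\<alpha> * U x powr \<alpha>)
           = L_alpha w \<mu> \<alpha> (\<lambda>y. ln (U y)) x"
proof -
  have summand: "w x y * Upsilon' (\<alpha> * ln (U y) - \<alpha> * ln (U x))
          = w x y * (U y powr \<alpha> - U x powr \<alpha>) / U x powr \<alpha>" for y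
    using pos[of x] pos[of y] unfolding Upsilon'_def
    by (simp add: exp_diff powr_def field_simps)
  show ?thesis
    unfolding L_alpha_def Psi_def laplacian_def summand
    using pos[of x] \<open>\<alpha> > 0\<close> by (simp add: sum_divide_distrib[symmetric] field_simps)
qed

lemma Psi_Upsilon_minus_Upsilon_a:
  fixes w :: "'v::finite \<Rightarrow> 'v \<Rightarrow> real"
  assumes "\<alpha> > 0"
  shows "Psi w \<mu> Upsilon v x - (1 / \<alpha>) * Psi w \<mu> (Upsilon_a \<alpha>) v x
           = Psi w \<mu> Upsilon' v x + L_alpha w \<mu> \<alpha> v x"
proof -
  have "w x y * Upsilon (v y - v x) - (1 / \<alpha>) * (w x y * Upsilon_a \<alpha> (v y - v x))
          = w x y * Upsilon' (v y - v x) - (1 / \<alpha>) * (w x y * Upsilon' (\<alpha> * v y - \<alpha> * v x))" for y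
    unfolding Upsilon_def Upsilon_a_def Upsilon'_def using assms by (simp add: field_simps)
  then have "(\<Sum>y\<in>UNIV. w x y * Upsilon (v y - v x))
               - (1 / \<alpha>) * (\<Sum>y\<in>UNIV. w x y * Upsilon_a \<alpha> (v y - v x))
           = (\<Sum>y\<in>UNIV. w x y * Upsilon' (v y - v x))
               - (1 / \<alpha>) * (\<Sum>y\<in>UNIV. w x y * Upsilon' (\<alpha> * v y - \<alpha> * v x))"
    by (simp add: sum_distrib_left sum_subtractf[symmetric])
  then have "(1 / \<mu> x) * ((\<Sum>y\<in>UNIV. w x y * Upsilon (v y - v x))
               - (1 / \<alpha>) * (\<Sum>y\<in>UNIV. w x y * Upsilon_a \<alpha> (v y - v x)))
           = (1 / \<mu> x) * ((\<Sum>y\<in>UNIV. w x y * Upsilon' (v y - v x))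
               - (1 / \<alpha>) * (\<Sum>y\<in>UNIV. w x y * Upsilon' (\<alpha> * v y - \<alpha> * v x)))"
    by simp
  then show ?thesis
    unfolding Psi_def L_alpha_def by (simp add: algebra_simps)
qed

lemma L_alpha_le_Lop:
  fixes w :: "'v::finite \<Rightarrow> 'v \<Rightarrow> real"
  assumes "\<alpha> > 0" and "weighted_graph w \<mu>"
  shows "L_alpha w \<mu> \<alpha> v x \<le> Lop w \<mu> v x"
proof -
  have w: "\<And>y. w x y \<ge> 0" and \<mu>: "\<mu> x > 0"
    using \<open>weighted_graph w \<mu>\<close> unfolding weighted_graph_def by auto
  have "\<alpha> * (\<Sum>y\<in>UNIV. w x y * (v y - v x)) = (\<Sum>y\<in>UNIV. w x y * (\<alpha> * (v y - v x)))"
    by (simp add: sum_distrib_left algebra_simps)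
  also have "\<dots> \<le> (\<Sum>y\<in>UNIV. w x y * Upsilon' (\<alpha> * v y - \<alpha> * v x))"
  proof (rule sum_mono)
    fix y
    show "w x y * (\<alpha> * (v y - v x)) \<le> w x y * Upsilon' (\<alpha> * v y - \<alpha> * v x)"
      unfolding Upsilon'_def using exp_ge_add_one_self[of "\<alpha> * v y - \<alpha> * v x"] w[of y]
      by (intro mult_left_mono) (auto simp: algebra_simps)
  qed
  finally have "(\<Sum>y\<in>UNIV. w x y * (v y - v x))
                  \<le> (1 / \<alpha>) * (\<Sum>y\<in>UNIV. w x y * Upsilon' (\<alpha> * v y - \<alpha> * v x))"
    using \<open>\<alpha> > 0\<close> by (simp add: field_simps)
  then have "(1 / \<mu> x) * (\<Sum>y\<in>UNIV. w x y * (v y - v x))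
               \<le> (1 / \<mu> x) * ((1 / \<alpha>) * (\<Sum>y\<in>UNIV. w x y * Upsilon' (\<alpha> * v y - \<alpha> * v x)))"
    using \<mu> by (intro mult_left_mono) auto
  then show ?thesis
    unfolding L_alpha_def Lop_def laplacian_def Psi_def by (simp add: algebra_simps)
qed

lemma CD_function_strict_mono:
  assumes "CD_function F" "0 < a" "a < b"
  shows "F a < F b"
proof -
  have "F a / a < F b / b" and "F a \<ge> 0"
    using assms unfolding CD_function_def strict_mono_on_def by auto
  have "F a = a * (F a / a)" using assms by simp
  also have "\<dots> \<le> b * (F a / a)"
    using \<open>F a \<ge> 0\<close> assms by (intro mult_right_mono) auto
  also have "\<dots> < b * (F b / b)"
    using \<open>F a / a < F b / b\<close> assms by (intro mult_strict_left_mono) auto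
  also have "\<dots> = F b" using assms by simp
  finally show ?thesis .
qed

lemma CD_function_mono:
  assumes "CD_function F" "0 < a" "a \<le> b"
  shows "F a \<le> F b"
  using CD_function_strict_mono[OF assms(1,2)] assms(3) by (cases "a = b") (auto simp: less_le)

lemma has_real_derivative_L_alpha:
  fixes w :: "'v::finite \<Rightarrow> 'v \<Rightarrow> real"
  assumes "\<alpha> \<noteq> 0"
    and flow: "\<And>y. ((\<lambda>s. V s y) has_real_derivative Psi w \<mu> Upsilon' (V t) y) (at t)"
  shows "((\<lambda>s. L_alpha w \<mu> \<alpha> (V s) x) has_real_derivative - C_alpha w \<mu> \<alpha> (V t) x) (at t)"
proof -
  define P where "P y = Psi w \<mu> Upsilon' (V t) y" for y
  define S where "S = (\<Sum>y\<in>UNIV. w x y * (exp (\<alpha> * V t y - \<alpha> * V t x) * (\<alpha> * P y - \<alpha> * P x)))"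
  have summand: "((\<lambda>s. w x y * Upsilon' (\<alpha> * V s y - \<alpha> * V s x)) has_real_derivative
          w x y * (exp (\<alpha> * V t y - \<alpha> * V t x) * (\<alpha> * P y - \<alpha> * P x))) (at t)" for y
    using flow[unfolded P_def[symmetric]] unfolding Upsilon'_def
    by - (rule derivative_eq_intros refl | assumption | simp)+
  then have "((\<lambda>s. L_alpha w \<mu> \<alpha> (V s) x) has_real_derivative - (1 / \<alpha>) * ((1 / \<mu> x) * S)) (at t)"
    unfolding L_alpha_def Psi_def S_def by (intro DERIV_cmult) (rule DERIV_sum, rule summand)
  moreover have "- (1 / \<alpha>) * ((1 / \<mu> x) * S) = - C_alpha w \<mu> \<alpha> (V t) x"
    unfolding C_alpha_def S_def P_def[symmetric] using \<open>\<alpha> \<noteq> 0\<close>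
    by (simp add: sum_distrib_left algebra_simps sum_subtractf sum_negf)
  ultimately show ?thesis by simp
qed

lemma isCont_le_of_left:
  fixes f :: "real \<Rightarrow> real"
  assumes "isCont f t" "a < t" "\<And>s. a < s \<Longrightarrow> s < t \<Longrightarrow> f s \<le> c"
  shows "f t \<le> c"
proof -
  have "(f \<longlongrightarrow> f t) (at_left t)"
    using assms(1) by (auto intro: tendsto_mono[OF at_le] simp: isCont_def)
  moreover have "\<forall>\<^sub>F s in at_left t. f s \<le> c"
    unfolding eventually_at_left_field using assms(2,3) by blast
  ultimately show ?thesis by (rule tendsto_upperbound) simp
qed

lemma first_crossing_time:
  fixes g :: "real \<Rightarrow> 'i::finite \<Rightarrow> real"
  assumes cont: "\<And>i. continuous_on {0<..} (\<lambda>s. g s i)"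
    and start: "\<forall>\<^sub>F s in at_right 0. \<forall>i. g s i < c"
    and "t1 > 0" "g t1 i1 \<ge> c"
  obtains t0 i0 where "t0 > 0" "g t0 i0 = c" "\<And>i. g t0 i \<le> c"
    "\<And>s i. 0 < s \<Longrightarrow> s < t0 \<Longrightarrow> g s i < c"
proof -
  obtain \<delta> where "\<delta> > 0" and early: "\<And>s i. 0 < s \<Longrightarrow> s < \<delta> \<Longrightarrow> g s i < c"
    using start unfolding eventually_at_right_field by auto
  \<comment> \<open>cut off at \<open>\<delta>/2\<close> so that \<open>S\<close> is closed although \<open>g\<close> is only continuous on \<open>(0,\<infinity>)\<close>\<close>
  define S where "S = (\<Union>i. {s \<in> {\<delta>/2..}. c \<le> g s i})"
  have "closed S"
    unfolding S_def using \<open>\<delta> > 0\<close>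
    by (intro closed_UN ballI continuous_on_closed_Collect_le continuous_on_const
        continuous_on_subset[OF cont]) auto
  have S_ge: "\<delta> \<le> s" if "s \<in> S" for s
  proof -
    obtain i where "\<delta>/2 \<le> s" "c \<le> g s i" using \<open>s \<in> S\<close> unfolding S_def by auto
    then show ?thesis using early[of s i] \<open>\<delta> > 0\<close> by (meson half_gt_zero le_less_trans not_le)
  qed
  have "t1 \<in> S"
    using early[of t1 i1] assms(3,4) \<open>\<delta> > 0\<close> unfolding S_def by force
  have "bdd_below S" using S_ge by (auto simp: bdd_below_def)
  define t0 where "t0 = Inf S"
  have "t0 \<in> S"
    unfolding t0_def using closed_contains_Inf \<open>closed S\<close> \<open>bdd_below S\<close> \<open>t1 \<in> S\<close> by blast
  then have "t0 > 0" using S_ge \<open>\<delta> > 0\<close> by force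
  obtain i0 where "c \<le> g t0 i0" using \<open>t0 \<in> S\<close> unfolding S_def by auto
  have before: "g s i < c" if "0 < s" "s < t0" for s i
  proof (rule ccontr)
    assume "\<not> g s i < c"
    moreover have "\<delta> \<le> s" using early[of s i] that \<open>\<not> g s i < c\<close> by (meson not_le)
    ultimately have "s \<in> S" using \<open>\<delta> > 0\<close> unfolding S_def by (auto simp: not_less)
    then show False using cInf_lower[OF _ \<open>bdd_below S\<close>] that unfolding t0_def by force
  qed
  have at_t0: "g t0 i \<le> c" for i
  proof (rule isCont_le_of_left[where f = "\<lambda>s. g s i" and a = 0])
    show "isCont (\<lambda>s. g s i) t0"
      using cont[of i] \<open>t0 > 0\<close> by (simp add: continuous_on_eq_continuous_at)
  qed (use \<open>t0 > 0\<close> before in \<open>auto simp: less_imp_le\<close>)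
  show thesis
    using that \<open>t0 > 0\<close> \<open>c \<le> g t0 i0\<close> at_t0[of i0] at_t0 before by force
qed

lemma relaxation_function_continuous_on:
  assumes "relaxation_function F \<phi>"
  shows "continuous_on {0<..} \<phi>"
proof (rule continuous_at_imp_continuous_on, rule ballI)
  fix s :: real assume "s \<in> {0<..}"
  then show "isCont \<phi> s"
    using assms unfolding relaxation_function_def by (auto intro: DERIV_isCont)
qed

lemma eventually_below_relaxation_function:
  assumes "relaxation_function F \<phi>" and "continuous_on {0..} h"
  shows "\<forall>\<^sub>F s in at_right 0. h s < \<phi> s"
proof -
  have "(h \<longlongrightarrow> h 0) (at_right 0)"
    using assms(2) unfolding continuous_on_def by (auto intro: tendsto_within_subset)
  then have "\<forall>\<^sub>F s in at_right 0. h s < h 0 + 1"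
    by (rule order_tendstoD) simp
  moreover have "\<forall>\<^sub>F s in at_right 0. h 0 + 1 < \<phi> s"
    using assms(1) unfolding relaxation_function_def filterlim_at_top_dense by auto
  ultimately show ?thesis by eventually_elim auto
qed

lemma subsolution_le_relaxation_function:
  fixes H D :: "real \<Rightarrow> 'v::finite \<Rightarrow> real"
  assumes F: "CD_function F" and \<phi>: "relaxation_function F \<phi>"
    and cont: "\<And>x. continuous_on {0..} (\<lambda>s. H s x)"
    and deriv: "\<And>t x. t > 0 \<Longrightarrow> ((\<lambda>s. H s x) has_real_derivative D t x) (at t)"
    and decay: "\<And>t x. t > 0 \<Longrightarrow> H t x > 0 \<Longrightarrow> (\<forall>y. H t y \<le> H t x) \<Longrightarrow> D t x \<le> - F (H t x)"
    and "t > 0"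
  shows "H t x \<le> \<phi> t"
proof (rule field_le_epsilon)
  fix \<epsilon> :: real assume "\<epsilon> > 0"
  have \<phi>_pos: "\<phi> s > 0" and \<phi>_deriv: "(\<phi> has_real_derivative - F (\<phi> s)) (at s)" if "s > 0" for s
    using \<phi> that unfolding relaxation_function_def by auto
  define g where "g s y = H s y - \<phi> s" for s y
  have g_cont: "continuous_on {0<..} (\<lambda>s. g s y)" for y
    unfolding g_def using relaxation_function_continuous_on[OF \<phi>]
    by (intro continuous_on_diff continuous_on_subset[OF cont]) auto
  have "\<forall>\<^sub>F s in at_right 0. \<forall>y. H s y < \<phi> s"
    by (intro eventually_all_finite eventually_below_relaxation_function[OF \<phi> cont])
  then have g_start: "\<forall>\<^sub>F s in at_right 0. \<forall>y. g s y < \<epsilon>"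
  proof eventually_elim
    case (elim s)
    show "\<forall>y. g s y < \<epsilon>"
    proof
      fix y
      show "g s y < \<epsilon>" using elim[rule_format, of y] \<open>\<epsilon> > 0\<close> unfolding g_def by linarith
    qed
  qed
  show "H t x \<le> \<phi> t + \<epsilon>"
  proof (rule ccontr)
    assume "\<not> H t x \<le> \<phi> t + \<epsilon>"
    then have "g t x \<ge> \<epsilon>" unfolding g_def by simp
    then obtain t0 x0 where "t0 > 0" and crossing: "g t0 x0 = \<epsilon>" and max: "\<And>y. g t0 y \<le> \<epsilon>"
      and before: "\<And>s y. 0 < s \<Longrightarrow> s < t0 \<Longrightarrow> g s y < \<epsilon>"
      using first_crossing_time[OF g_cont g_start \<open>t > 0\<close>] by blast
    have "H t0 x0 = \<phi> t0 + \<epsilon>" using crossing unfolding g_def by simp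
    have "H t0 y \<le> H t0 x0" for y
      using max[of y] \<open>H t0 x0 = \<phi> t0 + \<epsilon>\<close> unfolding g_def by linarith
    then have "D t0 x0 \<le> - F (\<phi> t0 + \<epsilon>)"
      using decay[OF \<open>t0 > 0\<close>, of x0] \<open>H t0 x0 = \<phi> t0 + \<epsilon>\<close> \<phi>_pos[OF \<open>t0 > 0\<close>] \<open>\<epsilon> > 0\<close>
      by auto
    moreover have "F (\<phi> t0) < F (\<phi> t0 + \<epsilon>)"
      using CD_function_strict_mono[OF F \<phi>_pos[OF \<open>t0 > 0\<close>]] \<open>\<epsilon> > 0\<close> by simp
    ultimately have "D t0 x0 - - F (\<phi> t0) < 0" by linarith
    moreover have "((\<lambda>s. g s x0) has_real_derivative D t0 x0 - - F (\<phi> t0)) (at t0)"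
      unfolding g_def using deriv[OF \<open>t0 > 0\<close>] \<phi>_deriv[OF \<open>t0 > 0\<close>] by (rule DERIV_diff)
    ultimately obtain d where "d > 0" and dec: "\<And>h. 0 < h \<Longrightarrow> h < d \<Longrightarrow> g t0 x0 < g (t0 - h) x0"
      using DERIV_neg_dec_left by blast
    define h where "h = min (d/2) (t0/2)"
    have "0 < h" "h < d" "0 < t0 - h" "t0 - h < t0"
      using \<open>d > 0\<close> \<open>t0 > 0\<close> unfolding h_def by auto
    then show False using dec[of h] before[of "t0 - h" x0] crossing by simp
  qed
qed

lemma heat_solution_continuous_on:
  assumes "heat_solution w \<mu> u"
  shows "continuous_on {0..} (\<lambda>s. u s x)"
  using assms unfolding heat_solution_def by (intro DERIV_continuous_on) auto

lemma heat_solution_ln_has_derivative: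
  fixes w :: "'v::finite \<Rightarrow> 'v \<Rightarrow> real"
  assumes "heat_solution w \<mu> u" and pos: "\<And>y. u t y > 0" and "t > 0"
  shows "((\<lambda>s. ln (u s x)) has_real_derivative Psi w \<mu> Upsilon' (\<lambda>y. ln (u t y)) x) (at t)"
proof -
  have "at t within {0..} = at t"
    using \<open>t > 0\<close> by (intro at_within_interior) (simp add: interior_real_atLeast)
  moreover have "((\<lambda>s. u s x) has_real_derivative laplacian w \<mu> (u t) x) (at t within {0..})"
    using assms(1) \<open>t > 0\<close> unfolding heat_solution_def by simp
  ultimately have "((\<lambda>s. u s x) has_real_derivative laplacian w \<mu> (u t) x) (at t)"
    by simp
  then have "((\<lambda>s. ln (u s x)) has_real_derivative (1 / u t x) * laplacian w \<mu> (u t) x) (at t)"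
    using DERIV_chain2[where f = ln and g = "\<lambda>s. u s x"] DERIV_ln_divide[OF pos[of x]] by blast
  then show ?thesis using Psi_Upsilon'_ln[of "u t", OF pos] by simp
qed

lemma heat_solution_L_alpha_ln_continuous_on:
  fixes w :: "'v::finite \<Rightarrow> 'v \<Rightarrow> real"
  assumes "heat_solution w \<mu> u" and pos: "\<And>s y. s \<ge> 0 \<Longrightarrow> u s y > 0"
  shows "continuous_on {0..} (\<lambda>s. L_alpha w \<mu> \<alpha> (\<lambda>y. ln (u s y)) x)"
proof -
  have "\<forall>s\<in>{0..}. u s y \<noteq> 0" for y
    using pos by (metis atLeast_iff less_irrefl)
  then show ?thesis
    unfolding L_alpha_def Psi_def Upsilon'_def
    by (intro continuous_intros continuous_on_ln heat_solution_continuous_on[OF assms(1)]) simp_all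
qed

lemma CD_alpha_at_maximum:
  fixes w :: "'v::finite \<Rightarrow> 'v \<Rightarrow> real"
  assumes "\<alpha> > 0" "weighted_graph w \<mu>" "CD_function F" "CD_alpha w \<mu> \<alpha> F"
    and "L_alpha w \<mu> \<alpha> v x > 0" "\<forall>y. L_alpha w \<mu> \<alpha> v y \<le> L_alpha w \<mu> \<alpha> v x"
  shows "F (L_alpha w \<mu> \<alpha> v x) \<le> C_alpha w \<mu> \<alpha> v x"
proof -
  have "F (L_alpha w \<mu> \<alpha> v x) \<le> F (Lop w \<mu> v x)"
    using CD_function_mono[OF assms(3,5)] L_alpha_le_Lop[OF assms(1,2)] by blast
  also have "\<dots> \<le> C_alpha w \<mu> \<alpha> v x"
    using assms(4-6) unfolding CD_alpha_def by blast
  finally show ?thesis .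
qed

lemma heat_solution_L_alpha_ln_le_relaxation_function:
  fixes w :: "'v::finite \<Rightarrow> 'v \<Rightarrow> real"
  assumes "\<alpha> > 0" "weighted_graph w \<mu>" "CD_function F" "relaxation_function F \<phi>"
    "CD_alpha w \<mu> \<alpha> F" "heat_solution w \<mu> u" and pos: "\<And>s y. s \<ge> 0 \<Longrightarrow> u s y > 0"
    and "t > 0"
  shows "L_alpha w \<mu> \<alpha> (\<lambda>y. ln (u t y)) x \<le> \<phi> t"
proof (rule subsolution_le_relaxation_function[OF assms(3,4) _ _ _ \<open>t > 0\<close>, where
      H = "\<lambda>s z. L_alpha w \<mu> \<alpha> (\<lambda>y. ln (u s y)) z"
      and D = "\<lambda>s z. - C_alpha w \<mu> \<alpha> (\<lambda>y. ln (u s y)) z"])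
  show "continuous_on {0..} (\<lambda>s. L_alpha w \<mu> \<alpha> (\<lambda>y. ln (u s y)) z)" for z
    using assms(6) pos by (rule heat_solution_L_alpha_ln_continuous_on)
  show "((\<lambda>s. L_alpha w \<mu> \<alpha> (\<lambda>y. ln (u s y)) z) has_real_derivative
          - C_alpha w \<mu> \<alpha> (\<lambda>y. ln (u s y)) z) (at s)" if "s > 0" for s z
    using \<open>\<alpha> > 0\<close> that pos
    by (intro has_real_derivative_L_alpha heat_solution_ln_has_derivative[OF assms(6)]) auto
  show "- C_alpha w \<mu> \<alpha> (\<lambda>y. ln (u s y)) z \<le> - F (L_alpha w \<mu> \<alpha> (\<lambda>y. ln (u s y)) z)"
    if "s > 0" "L_alpha w \<mu> \<alpha> (\<lambda>y. ln (u s y)) z > 0"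
      "\<forall>y. L_alpha w \<mu> \<alpha> (\<lambda>y'. ln (u s y')) y \<le> L_alpha w \<mu> \<alpha> (\<lambda>y. ln (u s y)) z" for s z
    using CD_alpha_at_maximum[OF assms(1,2,3,5) that(2,3)] by simp
qed

theorem theorem4p2:
  fixes w :: "'v::finite \<Rightarrow> 'v \<Rightarrow> real" and \<mu> :: "'v \<Rightarrow> real"
    and \<alpha> :: real and F \<phi> :: "real \<Rightarrow> real" and u :: "real \<Rightarrow> 'v \<Rightarrow> real"
  assumes "0 < \<alpha>" "\<alpha> < 1"
    and "weighted_graph w \<mu>" and "connected_graph w"
    and "CD_function F" and "relaxation_function F \<phi>"
    and "CD_alpha w \<mu> \<alpha> F"
    and "\<forall>t\<ge>0. \<forall>x. u t x > 0"
    and "heat_solution w \<mu> u"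
  shows "\<forall>t>0. \<forall>x.
      - laplacian w \<mu> (\<lambda>y. u t y powr \<alpha>) x / (\<alpha> * u t x powr \<alpha>) = L_alpha w \<mu> \<alpha> (\<lambda>y. ln (u t y)) x
      \<and> L_alpha w \<mu> \<alpha> (\<lambda>y. ln (u t y)) x \<le> \<phi> t
      \<and> (\<exists>d. ((\<lambda>s. ln (u s x)) has_real_derivative d) (at t)
             \<and> d \<ge> Psi w \<mu> Upsilon (\<lambda>y. ln (u t y)) x
                   - (1 / \<alpha>) * Psi w \<mu> (Upsilon_a \<alpha>) (\<lambda>y. ln (u t y)) x - \<phi> t)"
proof (intro allI impI conjI)
  fix t :: real and x assume "t > 0"
  have pos: "\<And>s y. s \<ge> 0 \<Longrightarrow> u s y > 0" using assms(8) by auto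
  then have pos_t: "\<And>y. u t y > 0" using \<open>t > 0\<close> by simp
  have bound: "L_alpha w \<mu> \<alpha> (\<lambda>y. ln (u t y)) z \<le> \<phi> t" for z
    using assms(1,3,5-7,9) pos \<open>t > 0\<close> by (rule heat_solution_L_alpha_ln_le_relaxation_function)
  then show "L_alpha w \<mu> \<alpha> (\<lambda>y. ln (u t y)) x \<le> \<phi> t" .
  show "- laplacian w \<mu> (\<lambda>y. u t y powr \<alpha>) x / (\<alpha> * u t x powr \<alpha>)
          = L_alpha w \<mu> \<alpha> (\<lambda>y. ln (u t y)) x"
    using pos_t \<open>0 < \<alpha>\<close> by (rule laplacian_powr_eq_L_alpha_ln)
  have "((\<lambda>s. ln (u s x)) has_real_derivative Psi w \<mu> Upsilon' (\<lambda>y. ln (u t y)) x) (at t)"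
    using assms(9) pos_t \<open>t > 0\<close> by (rule heat_solution_ln_has_derivative)
  moreover have "Psi w \<mu> Upsilon (\<lambda>y. ln (u t y)) x
      - (1 / \<alpha>) * Psi w \<mu> (Upsilon_a \<alpha>) (\<lambda>y. ln (u t y)) x - \<phi> t
      \<le> Psi w \<mu> Upsilon' (\<lambda>y. ln (u t y)) x"
    using Psi_Upsilon_minus_Upsilon_a[OF \<open>0 < \<alpha>\<close>, of w \<mu> "\<lambda>y. ln (u t y)" x] bound[of x]
    by simp
  ultimately show "\<exists>d. ((\<lambda>s. ln (u s x)) has_real_derivative d) (at t)
      \<and> d \<ge> Psi w \<mu> Upsilon (\<lambda>y. ln (u t y)) x
            - (1 / \<alpha>) * Psi w \<mu> (Upsilon_a \<alpha>) (\<lambda>y. ln (u t y)) x - \<phi> t"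
    by blast
qed

end
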